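(* Let $\mathcal{Z}$ be a domain with a probability distribution $\mathcal{D}$, let $\mathcal{H}$ be a hypothesis class, let $\ell:\mathcal{H}\times\mathcal{Z}\times\mathcal{Z}\to[0,B]$ be a bounded pairwise loss function, and let $h^\ast\in\arg\min_{h\in\mathcal{H}}\mathcal{L}(h)$ be a population risk minimizer. Let $z_1,\dots,z_n$ be drawn i.i.d. from $\mathcal{D}$. Then for any $\delta>0$, with probability at least $1-\delta$, \[ \frac{1}{n-1}\sum_{t=2}^n\hat{\mathcal{L}}_t(h^\ast) \leq \mathcal{L}(h^\ast) + \frac{2}{n-1}\sum_{t=2}^n\mathcal{R}_{t-1}(\ell\circ\mathcal{H}) + 3B\sqrt{\frac{\log\frac{1}{\delta}}{n-1}}. \]
   Context: Population risk: $\mathcal{L}(h)=\mathbb{E}_{z,z'}[\ell(h,z,z')]$ with $z,z'$ independent draws from $\mathcal{D}$. All-pairs penalty: $\hat{\mathcal{L}}_t(h)=\frac{1}{t-1}\sum_{\tau=1}^{t-1}\ell(h,z_t,z_\tau)$. Composite class $\ell\circ\mathcal{H}=\{(z,z')\mapsto \ell(h,z,z'): h\in\mathcal{H}\}$. For a class $\mathcal{G}$ of functions on $\mathcal{Z}\times\mathcal{Z}$, $\mathcal{R}_m(\mathcal{G})=\mathbb{E}\left[\sup_{g\in\mathcal{G}}\frac{1}{m}\sum_{\tau=1}^m\epsilon_\tau g(z,z_\tau)\right]$, the expectation over i.i.d. Rademacher signs $\epsilon_\tau$ and independent $z,z_1,\dots,z_m\sim\mathcal{D}$. *)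

theory Defs
  imports "HOL-Probability.Probability"
begin

definition pop_risk :: "'z measure \<Rightarrow> ('h \<Rightarrow> 'z \<Rightarrow> 'z \<Rightarrow> real) \<Rightarrow> 'h \<Rightarrow> real" where
  "pop_risk D l h = (\<integral>z. (\<integral>z'. l h z z' \<partial>D) \<partial>D)"

definition all_pairs_penalty :: "('h \<Rightarrow> 'z \<Rightarrow> 'z \<Rightarrow> real) \<Rightarrow> 'h \<Rightarrow> (nat \<Rightarrow> 'z) \<Rightarrow> nat \<Rightarrow> real" where
  "all_pairs_penalty l h zs t = (1 / (real t - 1)) * (\<Sum>\<tau>=1..t-1. l h (zs t) (zs \<tau>))"

definition rademacher_complexity ::
  "'z measure \<Rightarrow> 'h set \<Rightarrow> ('h \<Rightarrow> 'z \<Rightarrow> 'z \<Rightarrow> real) \<Rightarrow> nat \<Rightarrow> real" where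
  "rademacher_complexity D H l m =
     (\<integral>zs. (\<Sum>\<epsilon>\<in>PiE {1..m} (\<lambda>_. {-1, 1::real}).
              (SUP h\<in>H. (1 / real m) * (\<Sum>\<tau>=1..m. \<epsilon> \<tau> * l h (zs 0) (zs \<tau>)))) / 2 ^ m
      \<partial>(PiM {0..m} (\<lambda>_. D)))"

end

theory Submission
  imports Defs "HOL-Analysis.Harmonic_Numbers"
begin

text \<open>
  For the fixed hypothesis h*, the averaged all-pairs penalty S is an unbiased estimate of
  L(h*), so the bound already holds without the Rademacher term, which enters only through its
  nonnegativity.
  Conditioning S - L(h*) on the first k samples gives a Doob martingale whose k-th increment, as
  a function of the new sample, has mean zero and ranges over an interval of width
  B (k w(k+1) + W(k+1)), with pair weights w(t) = 1/((n-1)(t-1)) and tail weights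
  W(k) = w(k+1) + ... + w(n) = (H(n-1) - H(k-1))/(n-1) in terms of harmonic numbers.
  The identities sum_{j<=m} (H(m) - H(j)) = m and sum_{j<=m} (H(m) - H(j))^2 = 2m - H(m) bound the
  sum of the squared widths by 18 B^2/(n-1), and the Azuma-Hoeffding inequality yields the tail
  bound exp(-(n-1) e^2/(9 B^2)), which equals delta at e = 3 B sqrt(ln(1/delta)/(n-1)).
\<close>

lemma (in prob_space) nn_integral_exp_PiM_le:
  fixes \<Phi> :: "nat \<Rightarrow> (nat \<Rightarrow> 'a) \<Rightarrow> real" and c :: "nat \<Rightarrow> real"
  assumes \<Phi>_measurable: "\<And>k. \<Phi> k \<in> borel_measurable (PiM {1..k} (\<lambda>_. M))"
    and \<Phi>_0: "\<And>x. \<Phi> 0 x = 0"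
    and \<Phi>_Suc: "\<And>k x. k < n \<Longrightarrow> x \<in> space (PiM {1..k} (\<lambda>_. M)) \<Longrightarrow>
        (\<integral>\<^sup>+ y. ennreal (exp (\<Phi> (Suc k) (x(Suc k := y)))) \<partial>M) \<le> ennreal (exp (\<Phi> k x + c k))"
  shows "(\<integral>\<^sup>+ x. ennreal (exp (\<Phi> n x)) \<partial>PiM {1..n} (\<lambda>_. M)) \<le> ennreal (exp (\<Sum>k<n. c k))"
  using \<Phi>_Suc
proof (induction n)
  case 0
  interpret P0: prob_space "PiM {} (\<lambda>_. M)" by (rule prob_space_PiM) (rule prob_space_axioms)
  show ?case by (simp add: \<Phi>_0 P0.emeasure_space_1)
next
  case (Suc k)
  interpret product_sigma_finite "\<lambda>_. M" by unfold_locales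
  have insert_Suc: "{1..Suc k} = insert (Suc k) {1..k}" by auto
  have [measurable]: "\<Phi> (Suc k) \<in> borel_measurable (PiM (insert (Suc k) {1..k}) (\<lambda>_. M))"
    using \<Phi>_measurable[of "Suc k"] unfolding insert_Suc .
  have [measurable]: "\<Phi> k \<in> borel_measurable (PiM {1..k} (\<lambda>_. M))" by (fact \<Phi>_measurable)
  have "(\<integral>\<^sup>+ x. ennreal (exp (\<Phi> (Suc k) x)) \<partial>PiM {1..Suc k} (\<lambda>_. M))
     = (\<integral>\<^sup>+ x. (\<integral>\<^sup>+ y. ennreal (exp (\<Phi> (Suc k) (x(Suc k := y)))) \<partial>M) \<partial>PiM {1..k} (\<lambda>_. M))"
    unfolding insert_Suc by (rule product_nn_integral_insert) (auto simp del: One_nat_def)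
  also have "\<dots> \<le> (\<integral>\<^sup>+ x. ennreal (exp (\<Phi> k x)) * ennreal (exp (c k)) \<partial>PiM {1..k} (\<lambda>_. M))"
  proof (rule nn_integral_mono)
    fix x assume "x \<in> space (PiM {1..k} (\<lambda>_. M))"
    with Suc.prems[of k x] show "(\<integral>\<^sup>+ y. ennreal (exp (\<Phi> (Suc k) (x(Suc k := y)))) \<partial>M)
        \<le> ennreal (exp (\<Phi> k x)) * ennreal (exp (c k))"
      by (simp only: lessI exp_add ennreal_mult exp_ge_zero simp_thms)
  qed
  also have "\<dots> = (\<integral>\<^sup>+ x. ennreal (exp (\<Phi> k x)) \<partial>PiM {1..k} (\<lambda>_. M)) * ennreal (exp (c k))"
    by (rule nn_integral_multc) measurable
  also have "\<dots> \<le> ennreal (exp (\<Sum>j<k. c j)) * ennreal (exp (c k))"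
    by (intro mult_right_mono Suc.IH Suc.prems) auto
  also have "\<dots> = ennreal (exp (\<Sum>j<Suc k. c j))"
    by (simp add: exp_add ennreal_mult)
  finally show ?case .
qed

lemma (in prob_space) Azuma_Hoeffding_PiM:
  fixes \<Phi> :: "nat \<Rightarrow> (nat \<Rightarrow> 'a) \<Rightarrow> real" and \<Delta> :: "nat \<Rightarrow> (nat \<Rightarrow> 'a) \<Rightarrow> 'a \<Rightarrow> real"
    and a :: "nat \<Rightarrow> (nat \<Rightarrow> 'a) \<Rightarrow> real" and d :: "nat \<Rightarrow> real"
  assumes \<Phi>_measurable: "\<And>k. \<Phi> k \<in> borel_measurable (PiM {1..k} (\<lambda>_. M))"
    and \<Phi>_0: "\<And>x. \<Phi> 0 x = 0"
    and \<Phi>_Suc: "\<And>k x y. k < n \<Longrightarrow> \<Phi> (Suc k) (x(Suc k := y)) = \<Phi> k x + \<Delta> k x y"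
    and \<Delta>_measurable: "\<And>k x. k < n \<Longrightarrow> (\<And>\<tau>. \<tau> \<in> {1..k} \<Longrightarrow> x \<tau> \<in> space M) \<Longrightarrow>
        \<Delta> k x \<in> borel_measurable M"
    and \<Delta>_mean: "\<And>k x. k < n \<Longrightarrow> (\<And>\<tau>. \<tau> \<in> {1..k} \<Longrightarrow> x \<tau> \<in> space M) \<Longrightarrow>
        expectation (\<Delta> k x) = 0"
    and \<Delta>_range: "\<And>k x y. k < n \<Longrightarrow> (\<And>\<tau>. \<tau> \<in> {1..k} \<Longrightarrow> x \<tau> \<in> space M) \<Longrightarrow> y \<in> space M \<Longrightarrow>
        a k x \<le> \<Delta> k x y \<and> \<Delta> k x y \<le> a k x + d k"
    and \<epsilon>: "\<epsilon> > 0" and V: "(\<Sum>k<n. (d k)\<^sup>2) > 0"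
  shows "measure (PiM {1..n} (\<lambda>_. M)) {x \<in> space (PiM {1..n} (\<lambda>_. M)). \<epsilon> \<le> \<Phi> n x}
           \<le> exp (- 2 * \<epsilon>\<^sup>2 / (\<Sum>k<n. (d k)\<^sup>2))"
proof -
  let ?P = "PiM {1..n} (\<lambda>_. M)"
  interpret P: prob_space ?P by (rule prob_space_PiM) (rule prob_space_axioms)
  define V where "V = (\<Sum>k<n. (d k)\<^sup>2)"
  define s where "s = 4 * \<epsilon> / V"
  have s: "s > 0" using \<epsilon> V by (simp add: s_def V_def)
  have [measurable]: "\<Phi> n \<in> borel_measurable ?P" by (fact \<Phi>_measurable)
  have mgf: "(\<integral>\<^sup>+ x. ennreal (exp (s * \<Phi> n x)) \<partial>?P) \<le> ennreal (exp (\<Sum>k<n. s\<^sup>2 * (d k)\<^sup>2 / 8))"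
  proof (rule nn_integral_exp_PiM_le)
    fix k x assume k: "k < n" and "x \<in> space (PiM {1..k} (\<lambda>_. M))"
    hence x: "\<And>\<tau>. \<tau> \<in> {1..k} \<Longrightarrow> x \<tau> \<in> space M" by (auto simp: space_PiM)
    interpret interval_bounded_random_variable M "\<Delta> k x" "a k x" "a k x + d k"
      by unfold_locales (use \<Delta>_measurable[OF k x] \<Delta>_range[OF k x] in \<open>auto intro!: AE_I2\<close>)
    have "(\<integral>\<^sup>+ y. ennreal (exp (s * \<Phi> (Suc k) (x(Suc k := y)))) \<partial>M)
        = ennreal (exp (s * \<Phi> k x)) * (\<integral>\<^sup>+ y. ennreal (exp (s * \<Delta> k x y)) \<partial>M)"
      using k by (simp add: \<Phi>_Suc distrib_left exp_add ennreal_mult nn_integral_cmult)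
    also have "\<dots> \<le> ennreal (exp (s * \<Phi> k x)) * ennreal (exp (s\<^sup>2 * (d k)\<^sup>2 / 8))"
      using Hoeffdings_lemma_nn_integral_0[OF s \<Delta>_mean[OF k x]] by (intro mult_left_mono) auto
    finally show "(\<integral>\<^sup>+ y. ennreal (exp (s * \<Phi> (Suc k) (x(Suc k := y)))) \<partial>M)
        \<le> ennreal (exp (s * \<Phi> k x + s\<^sup>2 * (d k)\<^sup>2 / 8))"
      by (simp add: exp_add ennreal_mult)
  next
    show "(\<lambda>x. s * \<Phi> k x) \<in> borel_measurable (PiM {1..k} (\<lambda>_. M))" for k
      using \<Phi>_measurable[of k] by measurable
  qed (simp add: \<Phi>_0)
  have "emeasure ?P {x \<in> space ?P. \<epsilon> \<le> \<Phi> n x}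
      \<le> ennreal (exp (- s * \<epsilon>)) * (\<integral>\<^sup>+ x. ennreal (exp (s * \<Phi> n x)) * indicator (space ?P) x \<partial>?P)"
    by (rule Chernoff_ineq_nn_integral_ge[OF s]) measurable
  also have "(\<integral>\<^sup>+ x. ennreal (exp (s * \<Phi> n x)) * indicator (space ?P) x \<partial>?P)
      = (\<integral>\<^sup>+ x. ennreal (exp (s * \<Phi> n x)) \<partial>?P)"
    by (intro nn_integral_cong) simp
  also have "ennreal (exp (- s * \<epsilon>)) * \<dots> \<le> ennreal (exp (- s * \<epsilon>)) * ennreal (exp (s\<^sup>2 * V / 8))"
    using mgf by (intro mult_left_mono) (simp_all add: V_def sum_distrib_left sum_divide_distrib)
  also have "\<dots> = ennreal (exp (- 2 * \<epsilon>\<^sup>2 / V))"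
  proof -
    have "- s * \<epsilon> + s\<^sup>2 * V / 8 = - 2 * \<epsilon>\<^sup>2 / V"
      using V by (simp add: s_def V_def power2_eq_square field_simps)
    thus ?thesis by (simp flip: exp_add ennreal_mult)
  qed
  finally show ?thesis
    unfolding P.emeasure_eq_measure V_def by (subst (asm) ennreal_le_iff) auto
qed

lemma sum_harm_diff: "(\<Sum>j\<le>m. harm m - harm j :: real) = real m"
proof (induction m)
  case (Suc m)
  have "(\<Sum>j\<le>Suc m. harm (Suc m) - harm j :: real) = (\<Sum>j\<le>m. harm m - harm j + 1 / (real m + 1))"
    by (simp add: harm_Suc inverse_eq_divide algebra_simps)
  also have "\<dots> = real m + (real m + 1) * (1 / (real m + 1))"
    by (simp add: sum.distrib Suc.IH)
  finally show ?case by simp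
qed (simp add: harm_def)

lemma sum_harm_diff_squared: "(\<Sum>j\<le>m. (harm m - harm j :: real)\<^sup>2) = 2 * real m - harm m"
proof (induction m)
  case (Suc m)
  define e :: real where "e = 1 / (real m + 1)"
  have "(\<Sum>j\<le>Suc m. (harm (Suc m) - harm j :: real)\<^sup>2) = (\<Sum>j\<le>m. (harm m - harm j + e)\<^sup>2)"
    by (simp add: e_def harm_Suc inverse_eq_divide algebra_simps)
  also have "\<dots> = (\<Sum>j\<le>m. (harm m - harm j)\<^sup>2 + 2 * e * (harm m - harm j) + e\<^sup>2)"
    by (simp add: power2_eq_square algebra_simps)
  also have "\<dots> = (\<Sum>j\<le>m. (harm m - harm j)\<^sup>2) + 2 * e * (\<Sum>j\<le>m. harm m - harm j) + (real m + 1) * e\<^sup>2"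
    by (simp add: sum.distrib sum_distrib_left)
  also have "\<dots> = (2 * real m - harm m) + 2 * e * real m + (real m + 1) * e\<^sup>2"
    by (simp only: Suc.IH sum_harm_diff)
  also have "\<dots> = 2 * real (Suc m) - harm (Suc m)"
  proof -
    have pos: "real m + 1 > 0" by simp
    have "(real m + 1) * e\<^sup>2 = e" and "2 * e * real m = 2 - 2 * e"
      using pos by (simp_all add: e_def power2_eq_square divide_simps)
    thus ?thesis by (simp add: e_def harm_Suc inverse_eq_divide)
  qed
  finally show ?case .
qed (simp add: harm_def)

lemma sum_one_plus_harm_diff_squared_le: "(\<Sum>j\<le>m. (1 + harm m - harm j :: real)\<^sup>2) \<le> 5 * real m + 1"
proof -
  have "(\<Sum>j\<le>m. (1 + harm m - harm j :: real)\<^sup>2)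
      = (\<Sum>j\<le>m. 1 + 2 * (harm m - harm j) + (harm m - harm j)\<^sup>2)"
    by (simp add: power2_eq_square algebra_simps)
  also have "\<dots> = (real m + 1) + 2 * (\<Sum>j\<le>m. harm m - harm j) + (\<Sum>j\<le>m. (harm m - harm j)\<^sup>2)"
    by (simp add: sum.distrib sum_distrib_left)
  also have "\<dots> = (real m + 1) + 2 * real m + (2 * real m - harm m)"
    by (simp only: sum_harm_diff sum_harm_diff_squared)
  finally show ?thesis using harm_nonneg[of m] by simp
qed

definition pair_weight :: "nat \<Rightarrow> nat \<Rightarrow> real" where
  "pair_weight n t = 1 / (real n - 1) * (1 / (real t - 1))"

definition tail_weight :: "nat \<Rightarrow> nat \<Rightarrow> real" where
  "tail_weight n k = (harm (n - 1) - harm (k - 1)) / (real n - 1)"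

definition increment_width :: "nat \<Rightarrow> nat \<Rightarrow> real" where
  "increment_width n k = pair_weight n (Suc k) * real k + tail_weight n (Suc k)"

lemma tail_weight_Suc: "tail_weight n k = tail_weight n (Suc k) + pair_weight n (Suc k)"
proof (cases k)
  case (Suc j)
  have "tail_weight n (Suc k) = (harm (n - 1) - harm j - 1 / (real j + 1)) / (real n - 1)"
    using Suc by (simp add: tail_weight_def harm_Suc inverse_eq_divide)
  moreover have "pair_weight n (Suc k) = (1 / (real j + 1)) / (real n - 1)"
    using Suc by (simp add: pair_weight_def)
  ultimately show ?thesis
    using Suc by (simp add: tail_weight_def diff_divide_distrib)
qed (simp add: tail_weight_def pair_weight_def)

lemma tail_weight_self [simp]: "tail_weight n n = 0"
  by (simp add: tail_weight_def)

lemma pair_weight_Suc_nonneg: "1 \<le> n \<Longrightarrow> 0 \<le> pair_weight n (Suc t)"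
  by (simp add: pair_weight_def)

lemma tail_weight_nonneg: "k \<le> n \<Longrightarrow> 0 \<le> tail_weight n k"
  unfolding tail_weight_def by (cases n) (auto intro!: divide_nonneg_nonneg harm_mono)

lemma increment_width_bounds:
  assumes "1 \<le> m" "j \<le> m"
  shows "0 \<le> increment_width (Suc m) j \<and> increment_width (Suc m) j \<le> (1 + harm m - harm j) / real m"
proof -
  have pair: "0 \<le> pair_weight (Suc m) (Suc j) * real j" "pair_weight (Suc m) (Suc j) * real j \<le> 1 / real m"
    using assms by (auto simp: pair_weight_def)
  have tail: "tail_weight (Suc m) (Suc j) = (harm m - harm j) / real m"
    by (simp add: tail_weight_def)
  have "harm j \<le> (harm m :: real)" using assms by (intro harm_mono)
  hence "0 \<le> (harm m - harm j) / real m" by simp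
  with pair show ?thesis
    unfolding increment_width_def tail by (simp add: add_divide_distrib diff_divide_distrib)
qed

lemma sum_increment_width_squared_le:
  assumes "n \<ge> 2"
  shows "(\<Sum>j<n. (increment_width n j)\<^sup>2) \<le> 18 / (real n - 1)"
proof -
  define m where "m = n - 1"
  have n: "n = Suc m" and m: "1 \<le> m" using assms by (auto simp: m_def)
  have "(\<Sum>j<n. (increment_width n j)\<^sup>2) \<le> (\<Sum>j\<le>m. ((1 + harm m - harm j) / real m)\<^sup>2)"
    unfolding n lessThan_Suc_atMost using increment_width_bounds[OF m]
    by (intro sum_mono power_mono) auto
  also have "\<dots> = (\<Sum>j\<le>m. (1 + harm m - harm j)\<^sup>2) / (real m)\<^sup>2"
    by (simp add: power_divide sum_divide_distrib)
  also have "\<dots> \<le> (18 * real m) / (real m)\<^sup>2"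
    using sum_one_plus_harm_diff_squared_le[of m] m by (intro divide_right_mono) auto
  also have "\<dots> = 18 / (real n - 1)"
    using m by (simp add: n power2_eq_square)
  finally show ?thesis .
qed

lemma sum_increment_width_squared_pos:
  assumes "n \<ge> 2"
  shows "0 < (\<Sum>j<n. (increment_width n j)\<^sup>2)"
proof (rule sum_pos2)
  have "harm (n - 1) > (0 :: real)" using assms by simp
  thus "0 < (increment_width n 0)\<^sup>2"
    using assms by (simp add: increment_width_def tail_weight_def harm_def)
qed (use assms in auto)

locale pairwise_loss = prob_space D for D :: "'z measure" +
  fixes f :: "'z \<Rightarrow> 'z \<Rightarrow> real" and B :: real
  assumes measurable_loss [measurable]: "(\<lambda>(z, z'). f z z') \<in> borel_measurable (D \<Otimes>\<^sub>M D)"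
    and loss_bounds: "\<And>z z'. z \<in> space D \<Longrightarrow> z' \<in> space D \<Longrightarrow> 0 \<le> f z z' \<and> f z z' \<le> B"
begin

definition risk :: real where
  "risk = (\<integral>z. (\<integral>z'. f z z' \<partial>D) \<partial>D)"

definition marginal_risk :: "'z \<Rightarrow> real" where
  "marginal_risk z' = (\<integral>z. f z z' \<partial>D)"

lemma measurable_loss_comp [measurable (raw)]:
  assumes "a \<in> measurable M D" "b \<in> measurable M D"
  shows "(\<lambda>x. f (a x) (b x)) \<in> borel_measurable M"
  using measurable_compose[OF measurable_Pair[OF assms] measurable_loss] by simp

lemma borel_measurable_marginal_risk [measurable]: "marginal_risk \<in> borel_measurable D"
proof -
  have "(\<lambda>(z', z). f z z') \<in> borel_measurable (D \<Otimes>\<^sub>M D)" by measurable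
  from borel_measurable_lebesgue_integral[OF this] show ?thesis
    by (simp add: marginal_risk_def[abs_def])
qed

lemma integrable_loss_left: "z' \<in> space D \<Longrightarrow> integrable D (\<lambda>z. f z z')"
  by (rule integrable_const_bound[where B = B]) (auto dest: loss_bounds[of _ z'] intro!: AE_I2)

lemma bound_nonneg: "0 \<le> B"
proof -
  obtain z where "z \<in> space D" using not_empty by blast
  thus ?thesis using loss_bounds[of z z] by auto
qed

lemma marginal_risk_bounds: "z' \<in> space D \<Longrightarrow> 0 \<le> marginal_risk z' \<and> marginal_risk z' \<le> B"
  using integral_nonneg_AE[of "\<lambda>z. f z z'" D] integral_mono[of D "\<lambda>z. f z z'" "\<lambda>_. B"]
  by (auto simp: marginal_risk_def prob_space integrable_loss_left loss_bounds intro!: AE_I2)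

lemma integrable_marginal_risk: "integrable D marginal_risk"
  by (rule integrable_const_bound[where B = B]) (auto dest: marginal_risk_bounds intro!: AE_I2)

lemma risk_eq_integral_marginal_risk: "risk = (\<integral>z. marginal_risk z \<partial>D)"
proof -
  interpret pair_sigma_finite D D by unfold_locales
  interpret DD: prob_space "D \<Otimes>\<^sub>M D" by (rule prob_space_pair) unfold_locales
  have "integrable (D \<Otimes>\<^sub>M D) (case_prod f)"
    by (rule DD.integrable_const_bound[where B = B])
       (auto intro!: AE_I2 simp: space_pair_measure, metis abs_of_nonneg loss_bounds)
  from Fubini_integral[OF this] show ?thesis by (simp add: risk_def marginal_risk_def)
qed

text \<open>
  The conditional expectation of the centred statistic doob_process n n (note tail_weight n n = 0)
  given the first k samples: a summand f (x t) (x \<tau>) with \<tau> \<le> k < t averages to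
  marginal_risk (x \<tau>), and tail_weight n k is the total pair weight of all t > k.
\<close>
definition doob_process :: "nat \<Rightarrow> nat \<Rightarrow> (nat \<Rightarrow> 'z) \<Rightarrow> real" where
  "doob_process n k x =
     (\<Sum>t\<in>{1..k}. pair_weight n t * (\<Sum>\<tau>\<in>{1..<t}. f (x t) (x \<tau>) - risk))
     + tail_weight n k * (\<Sum>\<tau>\<in>{1..k}. marginal_risk (x \<tau>) - risk)"

definition doob_increment :: "nat \<Rightarrow> nat \<Rightarrow> (nat \<Rightarrow> 'z) \<Rightarrow> 'z \<Rightarrow> real" where
  "doob_increment n k x y =
     pair_weight n (Suc k) * (\<Sum>\<tau>\<in>{1..k}. f y (x \<tau>) - marginal_risk (x \<tau>))
     + tail_weight n (Suc k) * (marginal_risk y - risk)"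

lemma doob_process_0 [simp]: "doob_process n 0 x = 0"
  by (simp add: doob_process_def)

lemma doob_process_Suc:
  "doob_process n (Suc k) (x(Suc k := y)) = doob_process n k x + doob_increment n k x y"
proof -
  have "(\<Sum>t\<in>{1..k}. pair_weight n t * (\<Sum>\<tau>\<in>{1..<t}. f ((x(Suc k := y)) t) ((x(Suc k := y)) \<tau>) - risk))
      = (\<Sum>t\<in>{1..k}. pair_weight n t * (\<Sum>\<tau>\<in>{1..<t}. f (x t) (x \<tau>) - risk))"
    by (intro sum.cong refl arg_cong2[where f = "(*)"]) auto
  moreover have "(\<Sum>\<tau>\<in>{1..k}. marginal_risk ((x(Suc k := y)) \<tau>) - risk)
      = (\<Sum>\<tau>\<in>{1..k}. marginal_risk (x \<tau>) - risk)"
    by (intro sum.cong) auto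
  moreover have "{1..<Suc k} = {1..k}" by auto
  moreover have "(\<Sum>\<tau>\<in>{1..k}. f y (x \<tau>) - risk)
      = (\<Sum>\<tau>\<in>{1..k}. f y (x \<tau>) - marginal_risk (x \<tau>)) + (\<Sum>\<tau>\<in>{1..k}. marginal_risk (x \<tau>) - risk)"
    by (simp flip: sum.distrib)
  ultimately show ?thesis
    by (simp add: doob_process_def doob_increment_def atLeastAtMostSuc_conv tail_weight_Suc[of n k]
        algebra_simps)
qed

lemma measurable_doob_process [measurable]:
  "doob_process n k \<in> borel_measurable (PiM {1..k} (\<lambda>_. D))"
  unfolding doob_process_def by measurable

lemma measurable_doob_increment:
  "(\<And>\<tau>. \<tau> \<in> {1..k} \<Longrightarrow> x \<tau> \<in> space D) \<Longrightarrow> doob_increment n k x \<in> borel_measurable D"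
  unfolding doob_increment_def by measurable

lemma expectation_doob_increment:
  assumes x: "\<And>\<tau>. \<tau> \<in> {1..k} \<Longrightarrow> x \<tau> \<in> space D"
  shows "expectation (doob_increment n k x) = 0"
proof -
  have int_sum: "integrable D (\<lambda>y. \<Sum>\<tau>\<in>{1..k}. f y (x \<tau>) - marginal_risk (x \<tau>))"
    using x by (intro Bochner_Integration.integrable_sum Bochner_Integration.integrable_diff
        integrable_loss_left) auto
  have int_marginal: "integrable D (\<lambda>y. marginal_risk y - risk)"
    by (simp add: integrable_marginal_risk)
  have "expectation (\<lambda>y. \<Sum>\<tau>\<in>{1..k}. f y (x \<tau>) - marginal_risk (x \<tau>)) = 0"
    using x by (simp add: integrable_loss_left marginal_risk_def prob_space)
  moreover have "expectation (\<lambda>y. marginal_risk y - risk) = 0"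
    by (simp add: integrable_marginal_risk risk_eq_integral_marginal_risk prob_space)
  ultimately show ?thesis
    unfolding doob_increment_def[abs_def] using int_sum int_marginal by simp
qed

definition increment_offset :: "nat \<Rightarrow> nat \<Rightarrow> (nat \<Rightarrow> 'z) \<Rightarrow> real" where
  "increment_offset n k x =
     - pair_weight n (Suc k) * (\<Sum>\<tau>\<in>{1..k}. marginal_risk (x \<tau>)) - tail_weight n (Suc k) * risk"

lemma doob_increment_bounds:
  assumes k: "Suc k \<le> n" and x: "\<And>\<tau>. \<tau> \<in> {1..k} \<Longrightarrow> x \<tau> \<in> space D" and y: "y \<in> space D"
  shows "increment_offset n k x \<le> doob_increment n k x y
    \<and> doob_increment n k x y \<le> increment_offset n k x + B * increment_width n k"
proof -
  define p where "p = pair_weight n (Suc k)"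
  define q where "q = tail_weight n (Suc k)"
  have p: "0 \<le> p" using k by (simp add: p_def pair_weight_Suc_nonneg)
  have q: "0 \<le> q" using k by (simp add: q_def tail_weight_nonneg)
  have sum: "0 \<le> (\<Sum>\<tau>\<in>{1..k}. f y (x \<tau>))" "(\<Sum>\<tau>\<in>{1..k}. f y (x \<tau>)) \<le> real k * B"
    using sum_nonneg[of "{1..k}" "\<lambda>\<tau>. f y (x \<tau>)"] sum_mono[of "{1..k}" "\<lambda>\<tau>. f y (x \<tau>)" "\<lambda>_. B"]
      loss_bounds[OF y x] by auto
  have marginal: "0 \<le> marginal_risk y" "marginal_risk y \<le> B"
    using marginal_risk_bounds[OF y] by auto
  have "doob_increment n k x y
      = increment_offset n k x + (p * (\<Sum>\<tau>\<in>{1..k}. f y (x \<tau>)) + q * marginal_risk y)"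
    by (simp add: doob_increment_def increment_offset_def p_def q_def sum_subtractf algebra_simps)
  moreover have "0 \<le> p * (\<Sum>\<tau>\<in>{1..k}. f y (x \<tau>)) + q * marginal_risk y"
    using p q sum marginal by simp
  moreover have "p * (\<Sum>\<tau>\<in>{1..k}. f y (x \<tau>)) + q * marginal_risk y \<le> p * (real k * B) + q * B"
    using p q sum marginal by (intro add_mono mult_left_mono) auto
  ultimately show ?thesis
    by (simp add: increment_width_def p_def q_def algebra_simps)
qed

lemma doob_process_self:
  assumes n: "n \<ge> 2"
  shows "doob_process n n x
    = (1 / (real n - 1)) * (\<Sum>t=2..n. (1 / (real t - 1)) * (\<Sum>\<tau>=1..t-1. f (x t) (x \<tau>))) - risk"
proof -
  have summand: "pair_weight n t * (\<Sum>\<tau>\<in>{1..<t}. f (x t) (x \<tau>) - risk)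
      = (1 / (real n - 1)) * ((1 / (real t - 1)) * (\<Sum>\<tau>=1..t-1. f (x t) (x \<tau>))) - risk / (real n - 1)"
    if t: "t \<in> {2..n}" for t
  proof -
    have "{1..<t} = {1..t-1}" and "real (card {1..t-1}) = real t - 1" using t by auto
    hence sum: "(\<Sum>\<tau>\<in>{1..<t}. f (x t) (x \<tau>) - risk)
        = (\<Sum>\<tau>=1..t-1. f (x t) (x \<tau>)) - (real t - 1) * risk"
      by (simp add: sum_subtractf)
    have "1 / a * (1 / b) * (S - b * r) = 1 / a * (1 / b * S) - r / a" if "a \<noteq> 0" "b \<noteq> 0"
      for a b S r :: real
      using that by (simp add: field_simps)
    moreover have "real n - 1 \<noteq> 0" "real t - 1 \<noteq> 0" using n t by auto
    ultimately show ?thesis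
      unfolding pair_weight_def sum by blast
  qed
  have "{1..n} = insert 1 {2..n}" using n by auto
  hence "doob_process n n x = (\<Sum>t\<in>{2..n}. pair_weight n t * (\<Sum>\<tau>\<in>{1..<t}. f (x t) (x \<tau>) - risk))"
    by (simp add: doob_process_def pair_weight_def)
  also have "\<dots> = (\<Sum>t\<in>{2..n}. (1 / (real n - 1)) * ((1 / (real t - 1)) * (\<Sum>\<tau>=1..t-1. f (x t) (x \<tau>)))
      - risk / (real n - 1))"
    by (intro sum.cong refl summand)
  also have "\<dots> = (1 / (real n - 1)) * (\<Sum>t=2..n. (1 / (real t - 1)) * (\<Sum>\<tau>=1..t-1. f (x t) (x \<tau>)))
      - real (n - 1) * (risk / (real n - 1))"
    by (simp add: sum_subtractf sum_distrib_left)
  also have "real (n - 1) * (risk / (real n - 1)) = risk" using n by (simp add: of_nat_diff)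
  finally show ?thesis .
qed

lemma doob_process_degenerate:
  assumes B: "B = 0" and x: "x \<in> space (PiM {1..k} (\<lambda>_. D))"
  shows "doob_process n k x = 0"
proof -
  have xD: "\<And>\<tau>. \<tau> \<in> {1..k} \<Longrightarrow> x \<tau> \<in> space D" using x by (auto simp: space_PiM)
  have marginal: "marginal_risk z = 0" if "z \<in> space D" for z
    using marginal_risk_bounds[OF that] B by simp
  have "risk = (\<integral>z. 0 \<partial>D)"
    unfolding risk_eq_integral_marginal_risk by (rule Bochner_Integration.integral_cong) (simp_all add: marginal)
  hence "risk = 0" by simp
  moreover have loss: "f z z' = 0" if "z \<in> space D" "z' \<in> space D" for z z'
    using loss_bounds[OF that] B by simp
  ultimately show ?thesis
    by (auto simp: doob_process_def marginal xD intro!: sum.neutral loss xD)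
qed

lemma prob_doob_process_ge_le:
  assumes n: "n \<ge> 2" and B: "B > 0" and \<epsilon>: "\<epsilon> > 0"
  shows "measure (PiM {1..n} (\<lambda>_. D)) {x \<in> space (PiM {1..n} (\<lambda>_. D)). \<epsilon> \<le> doob_process n n x}
    \<le> exp (- (real n - 1) * \<epsilon>\<^sup>2 / (9 * B\<^sup>2))"
proof -
  define W where "W = (\<Sum>k<n. (increment_width n k)\<^sup>2)"
  have W: "0 < W" "W \<le> 18 / (real n - 1)"
    using sum_increment_width_squared_pos[OF n] sum_increment_width_squared_le[OF n] by (simp_all add: W_def)
  have sum_sq: "(\<Sum>k<n. (B * increment_width n k)\<^sup>2) = B\<^sup>2 * W"
    by (simp add: W_def power_mult_distrib sum_distrib_left)
  have "measure (PiM {1..n} (\<lambda>_. D)) {x \<in> space (PiM {1..n} (\<lambda>_. D)). \<epsilon> \<le> doob_process n n x}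
      \<le> exp (- 2 * \<epsilon>\<^sup>2 / (\<Sum>k<n. (B * increment_width n k)\<^sup>2))"
  proof (rule Azuma_Hoeffding_PiM[where \<Phi> = "doob_process n" and \<Delta> = "doob_increment n"
        and a = "increment_offset n"])
    show "doob_increment n k x \<in> borel_measurable D"
      and "expectation (doob_increment n k x) = 0"
      if "k < n" and "\<And>\<tau>. \<tau> \<in> {1..k} \<Longrightarrow> x \<tau> \<in> space D" for k x
      using measurable_doob_increment expectation_doob_increment that(2) by blast+
    show "increment_offset n k x \<le> doob_increment n k x y
        \<and> doob_increment n k x y \<le> increment_offset n k x + B * increment_width n k"
      if "k < n" and "\<And>\<tau>. \<tau> \<in> {1..k} \<Longrightarrow> x \<tau> \<in> space D" and "y \<in> space D" for k x y
      using doob_increment_bounds[of k n x y] that by simp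
    show "0 < (\<Sum>k<n. (B * increment_width n k)\<^sup>2)"
      unfolding sum_sq using B W by simp
  qed (simp_all add: \<epsilon> doob_process_Suc del: One_nat_def)
  also have "\<dots> \<le> exp (- 2 * \<epsilon>\<^sup>2 / (B\<^sup>2 * (18 / (real n - 1))))"
  proof -
    have "2 * \<epsilon>\<^sup>2 / (B\<^sup>2 * (18 / (real n - 1))) \<le> 2 * \<epsilon>\<^sup>2 / (B\<^sup>2 * W)"
      using B W by (intro frac_le mult_left_mono mult_pos_pos) auto
    thus ?thesis unfolding sum_sq by simp
  qed
  also have "\<dots> = exp (- (real n - 1) * \<epsilon>\<^sup>2 / (9 * B\<^sup>2))"
    using n B by (simp add: field_simps)
  finally show ?thesis .
qed

lemma prob_doob_process_le:
  assumes n: "n \<ge> 2" and \<delta>: "\<delta> > 0"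
  shows "1 - \<delta> \<le> measure (PiM {1..n} (\<lambda>_. D))
    {x \<in> space (PiM {1..n} (\<lambda>_. D)). doob_process n n x \<le> 3 * B * sqrt (ln (1 / \<delta>) / (real n - 1))}"
proof -
  let ?P = "PiM {1..n} (\<lambda>_. D)"
  interpret P: prob_space ?P by (rule prob_space_PiM) (rule prob_space_axioms)
  define \<epsilon> where "\<epsilon> = 3 * B * sqrt (ln (1 / \<delta>) / (real n - 1))"
  consider "\<delta> \<ge> 1" | "B = 0" | "\<delta> < 1" "B > 0" using bound_nonneg by linarith
  then show ?thesis
  proof cases
    case 1
    then show ?thesis using measure_nonneg[of ?P] by (smt (verit))
  next
    case 2
    hence everywhere: "{x \<in> space ?P. doob_process n n x \<le> \<epsilon>} = space ?P"
      by (auto simp: \<epsilon>_def doob_process_degenerate)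
    show ?thesis unfolding \<epsilon>_def[symmetric] everywhere P.prob_space using \<delta> by simp
  next
    case 3
    have N: "real n - 1 > 0" using n by simp
    have L: "0 < ln (1 / \<delta>) / (real n - 1)" using 3 \<delta> n by simp
    hence \<epsilon>: "0 < \<epsilon>" and \<epsilon>_sq: "\<epsilon>\<^sup>2 = 9 * B\<^sup>2 * (ln (1 / \<delta>) / (real n - 1))"
      using 3 by (simp_all add: \<epsilon>_def power_mult_distrib)
    have "- (real n - 1) * \<epsilon>\<^sup>2 / (9 * B\<^sup>2) = - ln (1 / \<delta>)"
      unfolding \<epsilon>_sq using N 3 by (simp add: field_simps)
    hence "exp (- (real n - 1) * \<epsilon>\<^sup>2 / (9 * B\<^sup>2)) = \<delta>"
      using \<delta> by (simp add: ln_div)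
    hence tail: "measure ?P {x \<in> space ?P. \<epsilon> \<le> doob_process n n x} \<le> \<delta>"
      using prob_doob_process_ge_le[OF n \<open>B > 0\<close> \<epsilon>] by simp
    have "1 - measure ?P {x \<in> space ?P. \<epsilon> \<le> doob_process n n x}
        = measure ?P (space ?P - {x \<in> space ?P. \<epsilon> \<le> doob_process n n x})"
      by (rule P.prob_compl[symmetric]) measurable
    also have "\<dots> \<le> measure ?P {x \<in> space ?P. doob_process n n x \<le> \<epsilon>}"
    proof (rule P.finite_measure_mono)
      show "{x \<in> space ?P. doob_process n n x \<le> \<epsilon>} \<in> sets ?P" by measurable
    qed auto
    finally show ?thesis using tail by (simp add: \<epsilon>_def)
  qed
qed

end

lemma sum_sign_vectors_linear_eq_0:
  "(\<Sum>\<epsilon>\<in>PiE I (\<lambda>_. {-1, 1::real}). \<Sum>\<tau>\<in>I. \<epsilon> \<tau> * a \<tau>) = 0"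
proof -
  define E where "E = PiE I (\<lambda>_. {-1, 1::real})"
  define flip where "flip \<epsilon> = (\<lambda>\<tau>\<in>I. - \<epsilon> \<tau>)" for \<epsilon> :: "'a \<Rightarrow> real"
  have "bij_betw flip E E"
    by (rule bij_betw_byWitness[where f' = flip])
       (auto simp: E_def flip_def PiE_iff extensional_def fun_eq_iff)
  hence "(\<Sum>\<epsilon>\<in>E. \<Sum>\<tau>\<in>I. \<epsilon> \<tau> * a \<tau>) = (\<Sum>\<epsilon>\<in>E. \<Sum>\<tau>\<in>I. flip \<epsilon> \<tau> * a \<tau>)"
    by (rule sum.reindex_bij_betw[symmetric])
  also have "\<dots> = - (\<Sum>\<epsilon>\<in>E. \<Sum>\<tau>\<in>I. \<epsilon> \<tau> * a \<tau>)"
    by (simp add: flip_def sum_negf)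
  finally show ?thesis by (simp add: E_def)
qed

lemma rademacher_complexity_nonneg:
  assumes "h \<in> H" and bounded: "\<And>h z z'. h \<in> H \<Longrightarrow> z \<in> space D \<Longrightarrow> z' \<in> space D \<Longrightarrow> \<bar>l h z z'\<bar> \<le> C"
  shows "0 \<le> rademacher_complexity D H l m"
  unfolding rademacher_complexity_def
proof (intro integral_nonneg_AE AE_I2 divide_nonneg_nonneg)
  fix zs assume "zs \<in> space (PiM {0..m} (\<lambda>_. D))"
  hence zs: "\<And>\<tau>. \<tau> \<in> {0..m} \<Longrightarrow> zs \<tau> \<in> space D" by (auto simp: space_PiM)
  define E where "E = PiE {1..m} (\<lambda>_. {-1, 1::real})"
  define G where "G h' \<epsilon> = (1 / real m) * (\<Sum>\<tau>=1..m. \<epsilon> \<tau> * l h' (zs 0) (zs \<tau>))" for h' \<epsilon>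
  have "bdd_above ((\<lambda>h'. G h' \<epsilon>) ` H)" if "\<epsilon> \<in> E" for \<epsilon>
  proof (rule bdd_aboveI2)
    fix h' assume "h' \<in> H"
    have "\<epsilon> \<tau> * l h' (zs 0) (zs \<tau>) \<le> C" if "\<tau> \<in> {1..m}" for \<tau>
    proof -
      have "\<epsilon> \<tau> \<in> {-1, 1}" using \<open>\<epsilon> \<in> E\<close> that by (auto simp: E_def)
      moreover have "\<bar>l h' (zs 0) (zs \<tau>)\<bar> \<le> C"
        using bounded[OF \<open>h' \<in> H\<close> zs[of 0] zs[of \<tau>]] that by simp
      ultimately show ?thesis by auto
    qed
    thus "G h' \<epsilon> \<le> (1 / real m) * (\<Sum>\<tau>=1..m. C)"
      unfolding G_def by (intro mult_left_mono sum_mono) auto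
  qed
  hence "(\<Sum>\<epsilon>\<in>E. G h \<epsilon>) \<le> (\<Sum>\<epsilon>\<in>E. SUP h'\<in>H. G h' \<epsilon>)"
    by (intro sum_mono cSUP_upper assms(1))
  moreover have "(\<Sum>\<epsilon>\<in>E. G h \<epsilon>) = 0"
    using sum_sign_vectors_linear_eq_0[where I = "{1..m}" and a = "\<lambda>\<tau>. l h (zs 0) (zs \<tau>)"]
    by (simp add: E_def G_def flip: sum_distrib_left sum_divide_distrib)
  ultimately show "0 \<le> (\<Sum>\<epsilon>\<in>PiE {1..m} (\<lambda>_. {-1, 1::real}).
      SUP h\<in>H. (1 / real m) * (\<Sum>\<tau>=1..m. \<epsilon> \<tau> * l h (zs 0) (zs \<tau>)))"
    by (simp add: E_def G_def)
qed simp

theorem lemma2: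
  fixes D :: "'z measure" and H :: "'h set" and l :: "'h \<Rightarrow> 'z \<Rightarrow> 'z \<Rightarrow> real"
    and B :: real and hstar :: 'h and n :: nat and \<delta> :: real
  assumes D: "prob_space D"
    and l_meas: "\<forall>h\<in>H. (\<lambda>(z, z'). l h z z') \<in> borel_measurable (D \<Otimes>\<^sub>M D)"
    and l_bounded: "\<forall>h\<in>H. \<forall>z\<in>space D. \<forall>z'\<in>space D. 0 \<le> l h z z' \<and> l h z z' \<le> B"
    and sup_meas: "\<forall>m. \<forall>\<epsilon>\<in>PiE {1..m} (\<lambda>_. {-1, 1::real}). (\<lambda>zs. SUP h\<in>H. (1 / real m) * (\<Sum>\<tau>=1..m. \<epsilon> \<tau> * l h (zs 0) (zs \<tau>)))
                        \<in> borel_measurable (PiM {0..m} (\<lambda>_. D))"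
    and hstar: "hstar \<in> H" "\<forall>h\<in>H. pop_risk D l hstar \<le> pop_risk D l h"
    and n: "n \<ge> 2"
    and \<delta>: "\<delta> > 0"
  shows "measure (PiM {1..n} (\<lambda>_. D))
           {zs \<in> space (PiM {1..n} (\<lambda>_. D)).
              (1 / (real n - 1)) * (\<Sum>t=2..n. all_pairs_penalty l hstar zs t)
                \<le> pop_risk D l hstar
                   + (2 / (real n - 1)) * (\<Sum>t=2..n. rademacher_complexity D H l (t - 1))
                   + 3 * B * sqrt (ln (1 / \<delta>) / (real n - 1))}
         \<ge> 1 - \<delta>"
proof -
  interpret pairwise_loss D "l hstar" B
    unfolding pairwise_loss_def pairwise_loss_axioms_def using D l_meas l_bounded hstar(1) by auto
  let ?P = "PiM {1..n} (\<lambda>_. D)"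
  let ?R = "(2 / (real n - 1)) * (\<Sum>t=2..n. rademacher_complexity D H l (t - 1))"
  let ?c = "3 * B * sqrt (ln (1 / \<delta>) / (real n - 1))"
  interpret P: prob_space ?P by (rule prob_space_PiM) (rule D)
  have "0 \<le> ?R"
    using n l_bounded
    by (intro mult_nonneg_nonneg sum_nonneg rademacher_complexity_nonneg[OF hstar(1), where C = B]) auto
  have event: "{zs \<in> space ?P. (1 / (real n - 1)) * (\<Sum>t=2..n. all_pairs_penalty l hstar zs t)
        \<le> pop_risk D l hstar + ?R + ?c} = {x \<in> space ?P. doob_process n n x \<le> ?R + ?c}"
    by (auto simp: doob_process_self[OF n] all_pairs_penalty_def pop_risk_def risk_def)
  have "1 - \<delta> \<le> measure ?P {x \<in> space ?P. doob_process n n x \<le> ?c}"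
    by (rule prob_doob_process_le[OF n \<delta>])
  also have "\<dots> \<le> measure ?P {x \<in> space ?P. doob_process n n x \<le> ?R + ?c}"
  proof (rule P.finite_measure_mono)
    show "{x \<in> space ?P. doob_process n n x \<le> ?R + ?c} \<in> sets ?P" by measurable
  qed (use \<open>0 \<le> ?R\<close> in auto)
  finally show ?thesis unfolding event .
qed

end
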